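(* There exists a natural number $n_0$ such that for every natural number $n\ge n_0$ there exists a self-adjoint projection $E\in M_n(\mathbb{C})$ such that $3n^{-1/2}(2E-I)$ is not an element of the closed convex hull $\mathcal{C}$ of the set $\{R\circ C: R,C\in M_n(\mathbb{C}),\ \|R\|_r\le1,\ \|C\|_c\le1\}$.
   Context: $R\circ C$ is the entrywise Schur product $(r_{ij}c_{ij})$; $I$ is the identity matrix. $\|R\|_r:=\max_i(\sum_j|r_{ij}|^2)^{1/2}$ and $\|C\|_c:=\max_j(\sum_i|c_{ij}|^2)^{1/2}$. *)

theory Defs
  imports "Jordan_Normal_Form.Schur_Decomposition"
begin

definition schur_prod :: "complex mat \<Rightarrow> complex mat \<Rightarrow> complex mat" where
  "schur_prod R C = mat (dim_row R) (dim_col R) (\<lambda>(i,j). R $$ (i,j) * C $$ (i,j))"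

definition row_norm :: "complex mat \<Rightarrow> real" where
  "row_norm R = Max (insert 0 ((\<lambda>i. sqrt (\<Sum>j<dim_col R. (cmod (R $$ (i,j)))\<^sup>2)) ` {..<dim_row R}))"

definition col_norm :: "complex mat \<Rightarrow> real" where
  "col_norm C = Max (insert 0 ((\<lambda>j. sqrt (\<Sum>i<dim_row C. (cmod (C $$ (i,j)))\<^sup>2)) ` {..<dim_col C}))"

definition schur_gen :: "nat \<Rightarrow> complex mat set" where
  "schur_gen n = {schur_prod R C | R C. R \<in> carrier_mat n n \<and> C \<in> carrier_mat n n
                     \<and> row_norm R \<le> 1 \<and> col_norm C \<le> 1}"

definition mat_convex_hull :: "nat \<Rightarrow> complex mat set \<Rightarrow> complex mat set" where
  "mat_convex_hull n S = {A. \<exists>(m::nat) (t::nat \<Rightarrow> real) (B::nat \<Rightarrow> complex mat).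
       (\<forall>k<m. t k \<ge> 0 \<and> B k \<in> S) \<and> (\<Sum>k<m. t k) = 1 \<and>
       A = mat n n (\<lambda>(i,j). \<Sum>k<m. complex_of_real (t k) * B k $$ (i,j))}"

text \<open>Frobenius (Euclidean) distance of n x n matrices; all norms on M_n(C) are equivalent.\<close>
definition mat_dist :: "nat \<Rightarrow> complex mat \<Rightarrow> complex mat \<Rightarrow> real" where
  "mat_dist n A B = sqrt (\<Sum>i<n. \<Sum>j<n. (cmod (A $$ (i,j) - B $$ (i,j)))\<^sup>2)"

definition mat_closure :: "nat \<Rightarrow> complex mat set \<Rightarrow> complex mat set" where
  "mat_closure n S = {A \<in> carrier_mat n n. \<forall>e>0. \<exists>B\<in>S. mat_dist n A B < e}"

definition closed_conv_schur :: "nat \<Rightarrow> complex mat set" where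
  "closed_conv_schur n = mat_closure n (mat_convex_hull n (schur_gen n))"

end

theory Submission
  imports Defs
begin

text \<open>
  Let \<open>Y\<close> be a real symmetric matrix with \<open>Y\<^sup>2 = I\<close>, so that \<open>E = (Y + I)/2\<close> is a self-adjoint
  projection with \<open>2E - I = Y\<close>, and consider the real-linear functional \<open>\<phi>(X) = Re tr(X Y\<^sup>T)\<close>.
  If \<open>|y\<^sub>i\<^sub>j| \<le> \<rho>\<^sub>i\<close>, then \<open>|r\<^sub>i\<^sub>j c\<^sub>i\<^sub>j| \<le> (|r\<^sub>i\<^sub>j|\<^sup>2 + |c\<^sub>i\<^sub>j|\<^sup>2)/2\<close> together with the row and column
  norm bounds and the symmetry of \<open>Y\<close> give \<open>\<phi>(R \<circ> C) \<le> \<Sum>\<^sub>i \<rho>\<^sub>i\<close>; being linear and continuous,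
  \<open>\<phi>\<close> obeys the same bound on the closed convex hull. On the other hand
  \<open>\<phi>(3n\<^sup>-\<^sup>1\<^sup>/\<^sup>2 Y) = 3n\<^sup>-\<^sup>1\<^sup>/\<^sup>2 tr(Y\<^sup>2) = 3 \<surd>n\<close>. So it suffices to find \<open>Y\<close> with \<open>\<Sum>\<^sub>i \<rho>\<^sub>i < 3 \<surd>n\<close>.
  Take the block-diagonal sum of a normalised Sylvester-Hadamard matrix of the largest size
  \<open>K = 2\<^sup>M \<le> n\<close> (all entries \<open>K\<^sup>-\<^sup>1\<^sup>/\<^sup>2\<close>) and, recursively, such a matrix of size \<open>n - K \<le> K\<close>;
  then \<open>\<Sum>\<^sub>i \<rho>\<^sub>i \<le> \<surd>K + 5/2 \<surd>(n - K) \<le> 5/2 \<surd>n\<close>.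
\<close>

section \<open>Symmetric involutions with small entries\<close>

definition sym_involution :: "nat \<Rightarrow> 'a :: comm_ring_1 mat \<Rightarrow> bool" where
  "sym_involution n Y \<longleftrightarrow> Y \<in> carrier_mat n n \<and> transpose_mat Y = Y \<and> Y * Y = 1\<^sub>m n"

lemma sym_involution_index_swap:
  assumes "sym_involution n Y" and "i < n" and "j < n"
  shows "Y $$ (j,i) = Y $$ (i,j)"
proof -
  have "Y \<in> carrier_mat n n" and "transpose_mat Y = Y"
    using assms(1) by (auto simp: sym_involution_def)
  then show ?thesis
    using assms(2,3) by (metis carrier_matD index_transpose_mat(1))
qed

lemma sym_involution_row_sqsum:
  assumes "sym_involution n Y" and "i < n"
  shows "(\<Sum>j<n. Y $$ (i,j) * Y $$ (i,j)) = 1"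
proof -
  have Y: "Y \<in> carrier_mat n n" and sq: "Y * Y = 1\<^sub>m n"
    using assms(1) by (auto simp: sym_involution_def)
  have "(\<Sum>j<n. Y $$ (i,j) * Y $$ (i,j)) = (\<Sum>j<n. Y $$ (i,j) * Y $$ (j,i))"
    using sym_involution_index_swap[OF assms(1) assms(2)] by simp
  also have "\<dots> = (Y * Y) $$ (i,i)"
    using Y assms(2) by (simp add: scalar_prod_def lessThan_atLeast0)
  finally show ?thesis
    using sq assms(2) by simp
qed

lemma sylvester_hadamard:
  "\<exists>H :: real mat. H \<in> carrier_mat (2^m) (2^m) \<and> transpose_mat H = H \<and>
     H * H = 2^m \<cdot>\<^sub>m 1\<^sub>m (2^m) \<and> (\<forall>i<2^m. \<forall>j<2^m. \<bar>H $$ (i,j)\<bar> = 1)"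
proof (induction m)
  case 0
  show ?case by (intro exI[of _ "1\<^sub>m 1"]) auto
next
  case (Suc m)
  then obtain H :: "real mat" where H: "H \<in> carrier_mat (2^m) (2^m)" and sym: "transpose_mat H = H"
    and sq: "H * H = 2^m \<cdot>\<^sub>m 1\<^sub>m (2^m)" and entries: "\<forall>i<2^m. \<forall>j<2^m. \<bar>H $$ (i,j)\<bar> = 1"
    by blast
  define H' where "H' = four_block_mat H H H (- H)"
  have "H' \<in> carrier_mat (2^Suc m) (2^Suc m)"
    using H by (simp add: H'_def mult_2)
  moreover have "transpose_mat H' = H'"
    using H by (simp add: H'_def transpose_four_block_mat transpose_uminus sym)
  moreover have "H' * H' = 2^Suc m \<cdot>\<^sub>m 1\<^sub>m (2^Suc m)"
  proof -
    have "H' * H' = four_block_mat (H * H + H * H) (H * H + - (H * H)) (H * H + - (H * H)) (H * H + H * H)"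
      using H by (simp add: H'_def mult_four_block_mat)
    also have "\<dots> = 2^Suc m \<cdot>\<^sub>m 1\<^sub>m (2^Suc m)"
      unfolding sq by (rule eq_matI) auto
    finally show ?thesis .
  qed
  moreover have "\<forall>i<2^Suc m. \<forall>j<2^Suc m. \<bar>H' $$ (i,j)\<bar> = 1"
    using H entries by (auto simp: H'_def)
  ultimately show ?case by blast
qed

lemma sym_involution_four_block_mat:
  assumes "sym_involution n A" and "sym_involution m B"
  shows "sym_involution (n + m) (four_block_mat A (0\<^sub>m n m) (0\<^sub>m m n) B)"
proof -
  have A: "A \<in> carrier_mat n n" and B: "B \<in> carrier_mat m m"
    using assms by (auto simp: sym_involution_def)
  show ?thesis
    using assms
    by (auto simp: sym_involution_def transpose_four_block_mat[OF A _ _ B]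
        mult_four_block_mat[OF A _ _ B A _ _ B])
qed

lemma sym_involution_normalized_hadamard:
  "\<exists>Y :: real mat. sym_involution (2^m) Y \<and> (\<forall>i<2^m. \<forall>j<2^m. \<bar>Y $$ (i,j)\<bar> = 1 / sqrt (2^m))"
proof -
  obtain H :: "real mat" where H: "H \<in> carrier_mat (2^m) (2^m)" and sym: "transpose_mat H = H"
    and sq: "H * H = 2^m \<cdot>\<^sub>m 1\<^sub>m (2^m)" and entries: "\<forall>i<2^m. \<forall>j<2^m. \<bar>H $$ (i,j)\<bar> = 1"
    using sylvester_hadamard by blast
  define c :: real where "c = 1 / sqrt (2^m)"
  have "(c \<cdot>\<^sub>m H) * (c \<cdot>\<^sub>m H) = c \<cdot>\<^sub>m (c \<cdot>\<^sub>m (H * H))"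
    using H by (simp add: mult_smult_assoc_mat[OF _ smult_carrier_mat[OF H]] mult_smult_distrib[OF H H])
  also have "\<dots> = 1\<^sub>m (2^m)"
    unfolding sq by (rule eq_matI) (auto simp: c_def)
  finally have "(c \<cdot>\<^sub>m H) * (c \<cdot>\<^sub>m H) = 1\<^sub>m (2^m)" .
  moreover have "transpose_mat (c \<cdot>\<^sub>m H) = c \<cdot>\<^sub>m transpose_mat H"
    by (rule eq_matI) auto
  ultimately have "sym_involution (2^m) (c \<cdot>\<^sub>m H)"
    using H sym by (simp add: sym_involution_def)
  moreover have "\<forall>i<2^m. \<forall>j<2^m. \<bar>(c \<cdot>\<^sub>m H) $$ (i,j)\<bar> = c"
    using H entries by (auto simp: abs_mult c_def)
  ultimately show ?thesis unfolding c_def by blast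
qed

lemma sqrt_add_five_halves_sqrt_le:
  fixes a b :: real
  assumes "0 \<le> b" and "b \<le> a"
  shows "sqrt a + 5/2 * sqrt b \<le> 5/2 * sqrt (a + b)"
proof -
  have "sqrt a * sqrt b \<le> sqrt a * sqrt a"
    using assms by (intro mult_left_mono) auto
  then have "(sqrt a + 5/2 * sqrt b)^2 \<le> (5/2)^2 * (a + b)"
    using assms by (simp add: power2_eq_square algebra_simps)
  then have "sqrt a + 5/2 * sqrt b \<le> sqrt ((5/2)^2 * (a + b))"
    by (rule real_le_rsqrt)
  then show ?thesis
    by (simp add: real_sqrt_mult)
qed

lemma sum_lessThan_add_split:
  fixes m n :: nat
  shows "(\<Sum>i<m + n. f i) = (\<Sum>i<m. f i) + (\<Sum>i<n. f (m + i))"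
  by (induction n) (auto simp: add.assoc)

lemma abs_four_block_diag_le:
  fixes A B :: "real mat"
  assumes "A \<in> carrier_mat K K" and "B \<in> carrier_mat L L"
    and A_le: "\<forall>i<K. \<forall>j<K. \<bar>A $$ (i,j)\<bar> \<le> \<alpha> i" and B_le: "\<forall>i<L. \<forall>j<L. \<bar>B $$ (i,j)\<bar> \<le> \<beta> i"
    and "i < K + L" and "j < K + L"
  shows "\<bar>four_block_mat A (0\<^sub>m K L) (0\<^sub>m L K) B $$ (i,j)\<bar> \<le> (if i < K then \<alpha> i else \<beta> (i - K))"
proof -
  have "0 \<le> \<alpha> i" if "i < K"
    using A_le that abs_ge_zero order_trans by blast
  moreover have "0 \<le> \<beta> (i - K)" if "\<not> i < K"
  proof -
    have "i - K < L" using \<open>i < K + L\<close> that by simp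
    then show ?thesis using B_le abs_ge_zero order_trans by blast
  qed
  ultimately show ?thesis
    using assms by auto
qed

lemma sym_involution_small_rows:
  "\<exists>(Y :: real mat) \<rho>. sym_involution n Y \<and> (\<forall>i<n. \<forall>j<n. \<bar>Y $$ (i,j)\<bar> \<le> \<rho> i) \<and>
     (\<Sum>i<n. \<rho> i) \<le> 5/2 * sqrt n"
proof (induction n rule: less_induct)
  case (less n)
  show ?case
  proof (cases "n = 0")
    case True
    then show ?thesis by (intro exI[of _ "1\<^sub>m 0"]) (auto simp: sym_involution_def)
  next
    case False
    then obtain M where M: "2^M \<le> n" "n < 2^(M+1)"
      using ex_power_ivl1[of 2 n] by auto
    define K :: nat where "K = 2^M"
    define L where "L = n - K"
    have n: "n = K + L" and "L \<le> K" and "K > 0"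
      using M by (auto simp: K_def L_def)
    obtain H :: "real mat" where H: "sym_involution K H"
      and H_entries: "\<forall>i<K. \<forall>j<K. \<bar>H $$ (i,j)\<bar> = 1 / sqrt K"
      using sym_involution_normalized_hadamard[of M] by (auto simp: K_def)
    obtain Z :: "real mat" and \<sigma> where Z: "sym_involution L Z"
      and Z_entries: "\<forall>i<L. \<forall>j<L. \<bar>Z $$ (i,j)\<bar> \<le> \<sigma> i"
      and \<sigma>_sum: "(\<Sum>i<L. \<sigma> i) \<le> 5/2 * sqrt L"
      using less.IH[of L] \<open>K > 0\<close> n by auto
    define \<rho> where "\<rho> i = (if i < K then 1 / sqrt K else \<sigma> (i - K))" for i
    have "sym_involution n (four_block_mat H (0\<^sub>m K L) (0\<^sub>m L K) Z)"
      unfolding n using H Z by (rule sym_involution_four_block_mat)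
    moreover have "\<forall>i<n. \<forall>j<n. \<bar>four_block_mat H (0\<^sub>m K L) (0\<^sub>m L K) Z $$ (i,j)\<bar> \<le> \<rho> i"
      using H Z H_entries Z_entries abs_four_block_diag_le[of H K Z L "\<lambda>_. 1 / sqrt K" \<sigma>]
      unfolding n \<rho>_def sym_involution_def by simp
    moreover have "(\<Sum>i<n. \<rho> i) \<le> 5/2 * sqrt n"
    proof -
      have "(\<Sum>i<n. \<rho> i) = K / sqrt K + (\<Sum>i<L. \<sigma> i)"
        unfolding n sum_lessThan_add_split by (simp add: \<rho>_def)
      also have "\<dots> \<le> sqrt K + 5/2 * sqrt L"
        using \<sigma>_sum by (simp add: real_div_sqrt)
      also have "\<dots> \<le> 5/2 * sqrt n"
        using sqrt_add_five_halves_sqrt_le[of L K] \<open>L \<le> K\<close> n by simp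
      finally show ?thesis .
    qed
    ultimately show ?thesis by blast
  qed
qed

section \<open>A functional separating the projection from the Schur hull\<close>

definition re_pairing :: "nat \<Rightarrow> real mat \<Rightarrow> complex mat \<Rightarrow> real" where
  "re_pairing n Y X = (\<Sum>i<n. \<Sum>j<n. Re (X $$ (i,j)) * Y $$ (i,j))"

lemma row_norm_ge:
  "i < dim_row R \<Longrightarrow> sqrt (\<Sum>j<dim_col R. (cmod (R $$ (i,j)))\<^sup>2) \<le> row_norm R"
  unfolding row_norm_def by (rule Max_ge) auto

lemma col_norm_ge:
  "j < dim_col C \<Longrightarrow> sqrt (\<Sum>i<dim_row C. (cmod (C $$ (i,j)))\<^sup>2) \<le> col_norm C"
  unfolding col_norm_def by (rule Max_ge) auto

lemma Re_mult_mult_le_norm_squares: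
  "Re (z * w) * a \<le> (\<bar>a\<bar> * (cmod z)\<^sup>2 + \<bar>a\<bar> * (cmod w)\<^sup>2) / 2"
proof -
  have "Re (z * w) * a \<le> \<bar>Re (z * w)\<bar> * \<bar>a\<bar>"
    by (metis abs_ge_self abs_mult)
  also have "\<dots> \<le> cmod (z * w) * \<bar>a\<bar>"
    by (intro mult_right_mono abs_Re_le_cmod) auto
  also have "\<dots> = cmod z * cmod w * \<bar>a\<bar>"
    by (simp add: norm_mult)
  also have "\<dots> \<le> ((cmod z)\<^sup>2 + (cmod w)\<^sup>2) / 2 * \<bar>a\<bar>"
    using sum_squares_bound[of "cmod z" "cmod w"] by (intro mult_right_mono) (auto simp: power2_eq_square)
  also have "\<dots> = (\<bar>a\<bar> * (cmod z)\<^sup>2 + \<bar>a\<bar> * (cmod w)\<^sup>2) / 2"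
    by (simp add: algebra_simps)
  finally show ?thesis .
qed

lemma re_pairing_schur_gen_le:
  assumes "X \<in> schur_gen n"
    and bounds: "\<forall>i<n. \<forall>j<n. \<bar>Y $$ (i,j)\<bar> \<le> \<rho> i \<and> \<bar>Y $$ (i,j)\<bar> \<le> \<sigma> j"
  shows "re_pairing n Y X \<le> ((\<Sum>i<n. \<rho> i) + (\<Sum>j<n. \<sigma> j)) / 2"
proof -
  obtain R C where X: "X = schur_prod R C" and R: "R \<in> carrier_mat n n" and C: "C \<in> carrier_mat n n"
    and "row_norm R \<le> 1" and "col_norm C \<le> 1"
    using assms(1) unfolding schur_gen_def by blast
  let ?r = "\<lambda>i j. (cmod (R $$ (i,j)))\<^sup>2" and ?c = "\<lambda>i j. (cmod (C $$ (i,j)))\<^sup>2"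
  have rows: "(\<Sum>j<n. ?r i j) \<le> 1" if "i < n" for i
    using order_trans[OF row_norm_ge \<open>row_norm R \<le> 1\<close>, of i] that R by simp
  have cols: "(\<Sum>i<n. ?c i j) \<le> 1" if "j < n" for j
    using order_trans[OF col_norm_ge \<open>col_norm C \<le> 1\<close>, of j] that C by simp
  have entry: "Re (X $$ (i,j)) * Y $$ (i,j) \<le> (\<rho> i * ?r i j + \<sigma> j * ?c i j) / 2"
    if "i < n" "j < n" for i j
  proof -
    have "Re (X $$ (i,j)) * Y $$ (i,j) \<le> (\<bar>Y $$ (i,j)\<bar> * ?r i j + \<bar>Y $$ (i,j)\<bar> * ?c i j) / 2"
      using that R Re_mult_mult_le_norm_squares[of "R $$ (i,j)" "C $$ (i,j)" "Y $$ (i,j)"]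
      by (simp add: X schur_prod_def)
    also have "\<dots> \<le> (\<rho> i * ?r i j + \<sigma> j * ?c i j) / 2"
      using bounds that by (intro divide_right_mono add_mono mult_right_mono) auto
    finally show ?thesis .
  qed
  have "re_pairing n Y X \<le> (\<Sum>i<n. \<Sum>j<n. (\<rho> i * ?r i j + \<sigma> j * ?c i j) / 2)"
    unfolding re_pairing_def using entry by (intro sum_mono) auto
  also have "\<dots> = ((\<Sum>i<n. \<Sum>j<n. \<rho> i * ?r i j) + (\<Sum>i<n. \<Sum>j<n. \<sigma> j * ?c i j)) / 2"
    by (simp add: sum.distrib sum_divide_distrib[symmetric])
  also have "\<dots> = ((\<Sum>i<n. \<rho> i * (\<Sum>j<n. ?r i j)) + (\<Sum>j<n. \<sigma> j * (\<Sum>i<n. ?c i j))) / 2"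
    by (simp add: sum_distrib_left sum.swap[of "\<lambda>i j. \<sigma> j * ?c i j"])
  also have "((\<Sum>i<n. \<rho> i * (\<Sum>j<n. ?r i j)) + (\<Sum>j<n. \<sigma> j * (\<Sum>i<n. ?c i j))) / 2
      \<le> ((\<Sum>i<n. \<rho> i) + (\<Sum>j<n. \<sigma> j)) / 2"
  proof -
    have "\<rho> i \<ge> 0" "\<sigma> i \<ge> 0" if "i < n" for i
      using bounds that abs_ge_zero order_trans by blast+
    then show ?thesis
      using rows cols by (intro divide_right_mono add_mono sum_mono) (auto intro: mult_left_le)
  qed
  finally show ?thesis .
qed

lemma re_pairing_convex_hull_le:
  assumes "\<forall>B\<in>S. re_pairing n Y B \<le> c" and "X \<in> mat_convex_hull n S"
  shows "re_pairing n Y X \<le> c"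
proof -
  obtain m :: nat and t :: "nat \<Rightarrow> real" and B :: "nat \<Rightarrow> complex mat"
    where tB: "\<forall>k<m. t k \<ge> 0 \<and> B k \<in> S" and t1: "(\<Sum>k<m. t k) = 1"
    and X: "X = mat n n (\<lambda>(i,j). \<Sum>k<m. complex_of_real (t k) * B k $$ (i,j))"
    using assms(2) unfolding mat_convex_hull_def by blast
  have "re_pairing n Y X = (\<Sum>i<n. \<Sum>j<n. \<Sum>k<m. t k * (Re (B k $$ (i,j)) * Y $$ (i,j)))"
    unfolding re_pairing_def
    by (intro sum.cong refl) (simp add: X Re_sum sum_distrib_right mult.assoc)
  also have "\<dots> = (\<Sum>k<m. t k * re_pairing n Y (B k))"
    unfolding re_pairing_def sum_distrib_left
    by (subst sum.swap, subst (2) sum.swap) (rule refl)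
  also have "\<dots> \<le> (\<Sum>k<m. t k * c)"
    using tB assms(1) by (intro sum_mono mult_left_mono) auto
  also have "\<dots> = c"
    using t1 by (simp add: sum_distrib_right[symmetric])
  finally show ?thesis .
qed

lemma entry_le_mat_dist:
  assumes "i < n" and "j < n"
  shows "cmod (A $$ (i,j) - B $$ (i,j)) \<le> mat_dist n A B"
proof -
  let ?d = "\<lambda>i j. (cmod (A $$ (i,j) - B $$ (i,j)))\<^sup>2"
  have "?d i j \<le> (\<Sum>j'<n. ?d i j')"
    using assms by (intro member_le_sum) auto
  also have "\<dots> \<le> (\<Sum>i'<n. \<Sum>j'<n. ?d i' j')"
    using assms by (intro member_le_sum[of i "{..<n}" "\<lambda>i'. \<Sum>j'<n. ?d i' j'"]) (auto intro: sum_nonneg)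
  finally have "sqrt (?d i j) \<le> mat_dist n A B"
    unfolding mat_dist_def by (rule real_sqrt_le_mono)
  then show ?thesis by simp
qed

lemma re_pairing_diff_le:
  "re_pairing n Y A - re_pairing n Y B \<le> (\<Sum>i<n. \<Sum>j<n. \<bar>Y $$ (i,j)\<bar>) * mat_dist n A B"
proof -
  have "re_pairing n Y A - re_pairing n Y B = (\<Sum>i<n. \<Sum>j<n. Re (A $$ (i,j) - B $$ (i,j)) * Y $$ (i,j))"
    unfolding re_pairing_def by (simp add: sum_subtractf[symmetric] algebra_simps)
  also have "\<dots> \<le> (\<Sum>i<n. \<Sum>j<n. \<bar>Y $$ (i,j)\<bar> * mat_dist n A B)"
  proof (intro sum_mono)
    fix i j assume "i \<in> {..<n}" "j \<in> {..<n}"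
    let ?z = "A $$ (i,j) - B $$ (i,j)"
    have "Re ?z * Y $$ (i,j) \<le> \<bar>Y $$ (i,j)\<bar> * \<bar>Re ?z\<bar>"
      by (metis abs_ge_self abs_mult mult.commute)
    also have "\<dots> \<le> \<bar>Y $$ (i,j)\<bar> * mat_dist n A B"
      using \<open>i \<in> {..<n}\<close> \<open>j \<in> {..<n}\<close>
      by (intro mult_left_mono order_trans[OF abs_Re_le_cmod entry_le_mat_dist]) auto
    finally show "Re ?z * Y $$ (i,j) \<le> \<bar>Y $$ (i,j)\<bar> * mat_dist n A B" .
  qed
  also have "\<dots> = (\<Sum>i<n. \<Sum>j<n. \<bar>Y $$ (i,j)\<bar>) * mat_dist n A B"
    by (simp only: sum_distrib_right)
  finally show ?thesis .
qed

lemma re_pairing_closure_le: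
  assumes "\<forall>B\<in>S. re_pairing n Y B \<le> c" and "A \<in> mat_closure n S"
  shows "re_pairing n Y A \<le> c"
proof (rule field_le_epsilon)
  fix e :: real assume "e > 0"
  define L where "L = (\<Sum>i<n. \<Sum>j<n. \<bar>Y $$ (i,j)\<bar>)"
  have "L \<ge> 0" unfolding L_def by (intro sum_nonneg) auto
  then have "e / (L + 1) > 0" using \<open>e > 0\<close> by simp
  then obtain B where "B \<in> S" and dist: "mat_dist n A B < e / (L + 1)"
    using assms(2) unfolding mat_closure_def by blast
  have "L * mat_dist n A B \<le> e"
  proof -
    have "mat_dist n A B \<ge> 0"
      unfolding mat_dist_def by (intro real_sqrt_ge_zero sum_nonneg) auto
    then have "L * mat_dist n A B \<le> (L + 1) * (e / (L + 1))"
      using dist \<open>L \<ge> 0\<close> by (intro mult_mono) auto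
    then show ?thesis using \<open>L \<ge> 0\<close> by simp
  qed
  moreover have "re_pairing n Y B \<le> c"
    using assms(1) \<open>B \<in> S\<close> by blast
  ultimately show "re_pairing n Y A \<le> c + e"
    using re_pairing_diff_le[of n Y A B] unfolding L_def by linarith
qed

lemma re_pairing_closed_conv_schur_le:
  assumes "X \<in> closed_conv_schur n"
    and bounds: "\<forall>i<n. \<forall>j<n. \<bar>Y $$ (i,j)\<bar> \<le> \<rho> i \<and> \<bar>Y $$ (i,j)\<bar> \<le> \<sigma> j"
  shows "re_pairing n Y X \<le> ((\<Sum>i<n. \<rho> i) + (\<Sum>j<n. \<sigma> j)) / 2"
proof -
  define b where "b = ((\<Sum>i<n. \<rho> i) + (\<Sum>j<n. \<sigma> j)) / 2"
  have "\<forall>B\<in>schur_gen n. re_pairing n Y B \<le> b"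
    unfolding b_def using re_pairing_schur_gen_le[OF _ bounds] by (rule ballI)
  then have "\<forall>B\<in>mat_convex_hull n (schur_gen n). re_pairing n Y B \<le> b"
    using re_pairing_convex_hull_le by blast
  then show ?thesis
    using assms(1) unfolding closed_conv_schur_def b_def by (rule re_pairing_closure_le)
qed

lemma re_pairing_smult_self:
  assumes "sym_involution n Y"
  shows "re_pairing n Y (complex_of_real c \<cdot>\<^sub>m map_mat complex_of_real Y) = c * n"
proof -
  have Y: "Y \<in> carrier_mat n n"
    using assms by (simp add: sym_involution_def)
  have "re_pairing n Y (complex_of_real c \<cdot>\<^sub>m map_mat complex_of_real Y)
      = (\<Sum>i<n. c * (\<Sum>j<n. Y $$ (i,j) * Y $$ (i,j)))"
    unfolding re_pairing_def using Y by (intro sum.cong refl) (simp add: sum_distrib_left mult.assoc)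
  also have "\<dots> = c * n"
    using sym_involution_row_sqsum[OF assms] by simp
  finally show ?thesis .
qed

lemma smult_sym_involution_notin_closed_conv_schur:
  assumes Y: "sym_involution n Y" and rows: "\<forall>i<n. \<forall>j<n. \<bar>Y $$ (i,j)\<bar> \<le> \<rho> i"
    and "(\<Sum>i<n. \<rho> i) < c * n"
  shows "complex_of_real c \<cdot>\<^sub>m map_mat complex_of_real Y \<notin> closed_conv_schur n"
proof
  assume "complex_of_real c \<cdot>\<^sub>m map_mat complex_of_real Y \<in> closed_conv_schur n"
  moreover have "\<forall>i<n. \<forall>j<n. \<bar>Y $$ (i,j)\<bar> \<le> \<rho> i \<and> \<bar>Y $$ (i,j)\<bar> \<le> \<rho> j"
  proof (intro allI impI conjI)
    fix i j assume "i < n" "j < n"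
    then show "\<bar>Y $$ (i,j)\<bar> \<le> \<rho> i" using rows by blast
    have "\<bar>Y $$ (j,i)\<bar> \<le> \<rho> j" using rows \<open>i < n\<close> \<open>j < n\<close> by blast
    then show "\<bar>Y $$ (i,j)\<bar> \<le> \<rho> j"
      using sym_involution_index_swap[OF Y \<open>i < n\<close> \<open>j < n\<close>] by simp
  qed
  ultimately have "re_pairing n Y (complex_of_real c \<cdot>\<^sub>m map_mat complex_of_real Y)
      \<le> ((\<Sum>i<n. \<rho> i) + (\<Sum>i<n. \<rho> i)) / 2"
    by (rule re_pairing_closed_conv_schur_le)
  then show False
    using re_pairing_smult_self[OF Y, of c] \<open>(\<Sum>i<n. \<rho> i) < c * n\<close> by simp
qed

section \<open>The projection associated with an involution\<close>

lemma involution_half_plus_one_idempotent: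
  fixes Z :: "'a :: field_char_0 mat"
  assumes Z: "Z \<in> carrier_mat n n" and sq: "Z * Z = 1\<^sub>m n"
  defines "E \<equiv> (1/2) \<cdot>\<^sub>m (Z + 1\<^sub>m n)"
  shows "E * E = E"
proof -
  have "(Z + 1\<^sub>m n) * (Z + 1\<^sub>m n) = Z * (Z + 1\<^sub>m n) + (Z + 1\<^sub>m n)"
    using add_mult_distrib_mat[OF Z one_carrier_mat, of "Z + 1\<^sub>m n" n] Z by simp
  also have "Z * (Z + 1\<^sub>m n) = Z * Z + Z"
    using mult_add_distrib_mat[OF Z Z one_carrier_mat] Z by simp
  also have "Z * Z + Z + (Z + 1\<^sub>m n) = 2 \<cdot>\<^sub>m (Z + 1\<^sub>m n)"
    unfolding sq using Z by (intro eq_matI) auto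
  finally have W_sq: "(Z + 1\<^sub>m n) * (Z + 1\<^sub>m n) = 2 \<cdot>\<^sub>m (Z + 1\<^sub>m n)" .
  have W: "Z + 1\<^sub>m n \<in> carrier_mat n n"
    using Z by simp
  have "E * E = (1/2) \<cdot>\<^sub>m ((Z + 1\<^sub>m n) * ((1/2) \<cdot>\<^sub>m (Z + 1\<^sub>m n)))"
    unfolding E_def by (rule mult_smult_assoc_mat[OF W smult_carrier_mat[OF W]])
  also have "(Z + 1\<^sub>m n) * ((1/2) \<cdot>\<^sub>m (Z + 1\<^sub>m n)) = (1/2) \<cdot>\<^sub>m (2 \<cdot>\<^sub>m (Z + 1\<^sub>m n))"
    unfolding mult_smult_distrib[OF W W] W_sq ..
  also have "(1/2) \<cdot>\<^sub>m ((1/2) \<cdot>\<^sub>m (2 \<cdot>\<^sub>m (Z + 1\<^sub>m n))) = E"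
    unfolding E_def using Z by (intro eq_matI) (auto simp: field_simps)
  finally show ?thesis .
qed

lemma two_smult_half_plus_one_minus_one:
  fixes Z :: "'a :: field_char_0 mat"
  assumes "Z \<in> carrier_mat n n"
  shows "2 \<cdot>\<^sub>m ((1/2) \<cdot>\<^sub>m (Z + 1\<^sub>m n)) - 1\<^sub>m n = Z"
  using assms by (intro eq_matI) (auto simp: field_simps)

lemma mat_adjoint_half_plus_one_of_real:
  assumes "sym_involution n Y"
  shows "mat_adjoint ((1/2) \<cdot>\<^sub>m (map_mat complex_of_real Y + 1\<^sub>m n))
       = (1/2) \<cdot>\<^sub>m (map_mat complex_of_real Y + 1\<^sub>m n)"
  using assms sym_involution_index_swap[OF assms]
  by (intro eq_matI) (auto simp: sym_involution_def mat_adjoint_def mat_of_rows_def cols_def)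

lemma sym_involution_half_plus_one_projection:
  assumes Y: "sym_involution n Y"
  defines "E \<equiv> (1/2) \<cdot>\<^sub>m (map_mat complex_of_real Y + 1\<^sub>m n)"
  shows "E \<in> carrier_mat n n" and "mat_adjoint E = E" and "E * E = E"
    and "2 \<cdot>\<^sub>m E - 1\<^sub>m n = map_mat complex_of_real Y"
proof -
  have Y_carrier: "Y \<in> carrier_mat n n" and "Y * Y = 1\<^sub>m n"
    using Y by (auto simp: sym_involution_def)
  then have Z: "map_mat complex_of_real Y \<in> carrier_mat n n"
    and "map_mat complex_of_real Y * map_mat complex_of_real Y = 1\<^sub>m n"
    by (auto simp: of_real_hom.mat_hom_mult[OF Y_carrier Y_carrier, symmetric] of_real_hom.mat_hom_one)
  then show "E \<in> carrier_mat n n" and "mat_adjoint E = E" and "E * E = E"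
    and "2 \<cdot>\<^sub>m E - 1\<^sub>m n = map_mat complex_of_real Y"
    unfolding E_def using mat_adjoint_half_plus_one_of_real[OF Y]
    by (auto intro: involution_half_plus_one_idempotent two_smult_half_plus_one_minus_one)
qed

theorem mainTheorem6:
  shows "\<exists>n0::nat. \<forall>n\<ge>n0. \<exists>E::complex mat.
           E \<in> carrier_mat n n \<and> mat_adjoint E = E \<and> E * E = E \<and>
           complex_of_real (3 / sqrt (real n)) \<cdot>\<^sub>m (2 \<cdot>\<^sub>m E - 1\<^sub>m n)
             \<notin> closed_conv_schur n"
proof (intro exI[of _ "1::nat"] allI impI)
  fix n :: nat assume "n \<ge> 1"
  obtain Y :: "real mat" and \<rho> where Y: "sym_involution n Y"
    and rows: "\<forall>i<n. \<forall>j<n. \<bar>Y $$ (i,j)\<bar> \<le> \<rho> i" and \<rho>_sum: "(\<Sum>i<n. \<rho> i) \<le> 5/2 * sqrt n"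
    using sym_involution_small_rows by blast
  define E where "E = (1/2) \<cdot>\<^sub>m (map_mat complex_of_real Y + 1\<^sub>m n)"
  have "3 / sqrt n * n = 3 * sqrt n"
    by (metis real_div_sqrt of_nat_0_le_iff times_divide_eq_left mult.commute)
  moreover have "sqrt n > 0"
    using \<open>n \<ge> 1\<close> by simp
  ultimately have "(\<Sum>i<n. \<rho> i) < 3 / sqrt n * n"
    using \<rho>_sum by linarith
  then have "complex_of_real (3 / sqrt n) \<cdot>\<^sub>m (2 \<cdot>\<^sub>m E - 1\<^sub>m n) \<notin> closed_conv_schur n"
    unfolding E_def sym_involution_half_plus_one_projection(4)[OF Y]
    by (rule smult_sym_involution_notin_closed_conv_schur[OF Y rows])
  then show "\<exists>E::complex mat. E \<in> carrier_mat n n \<and> mat_adjoint E = E \<and> E * E = E \<and>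
      complex_of_real (3 / sqrt (real n)) \<cdot>\<^sub>m (2 \<cdot>\<^sub>m E - 1\<^sub>m n) \<notin> closed_conv_schur n"
    using sym_involution_half_plus_one_projection(1-3)[OF Y] unfolding E_def by blast
qed

end
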